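(* Let $X$ be a real separable Hilbert space, $A\in\mathcal L(X)$ monotone, $x^\dagger,\bar x\in X$, $y=Ax^\dagger$, and $d(R):=\min\{\|x^\dagger-\bar x-Aw\|:\|w\|\le R\}$. Suppose there are constants $K,q>0$ and $\underline R>1$ with $$d(R)\le\frac{K}{(\log R)^q}\quad\text{for all }R\ge\underline R.$$ Then the bias $B^A_{x^\dagger}(\alpha):=\alpha\|(A+\alpha I)^{-1}(x^\dagger-\bar x)\|$ satisfies $B^A_{x^\dagger}(\alpha)=\mathcal O\big((\log\frac1\alpha)^{-q}\big)$ as $\alpha\to0$. Moreover, if $\alpha(\delta)=c\,\delta^\zeta$ with constants $c>0$ and $0<\zeta<1$, then for all $y^\delta$ with $\|y-y^\delta\|\le\delta$, $$\|x^\delta_{\alpha(\delta)}-x^\dagger\|=\mathcal O\big((\log\tfrac1\delta)^{-q}\big)\quad\text{as }\delta\to0.$$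
   Context: $A$ monotone: $\langle Ax,x\rangle\ge0$ for all $x$. $x^\delta_\alpha:=(A+\alpha I)^{-1}(y^\delta+\alpha\bar x)$ is the Lavrentiev-regularized solution. $\mathcal L(X)$: bounded linear operators on $X$. *)

theory Defs
  imports "HOL-Analysis.Analysis" "HOL-Library.Landau_Symbols"
begin

definition monotone_op :: "('a::real_inner \<Rightarrow> 'a) \<Rightarrow> bool" where
  "monotone_op A \<longleftrightarrow> (\<forall>x. inner (A x) x \<ge> 0)"

definition resolvent :: "('a::real_normed_vector \<Rightarrow> 'a) \<Rightarrow> real \<Rightarrow> 'a \<Rightarrow> 'a" where
  "resolvent A \<alpha> = inv (\<lambda>x. A x + \<alpha> *\<^sub>R x)"

definition lavrentiev :: "('a::real_normed_vector \<Rightarrow> 'a) \<Rightarrow> real \<Rightarrow> 'a \<Rightarrow> 'a \<Rightarrow> 'a" where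
  "lavrentiev A \<alpha> yd xbar = resolvent A \<alpha> (yd + \<alpha> *\<^sub>R xbar)"

definition dist_fun :: "('a::real_normed_vector \<Rightarrow> 'a) \<Rightarrow> 'a \<Rightarrow> 'a \<Rightarrow> real \<Rightarrow> real" where
  "dist_fun A xdag xbar R = Inf {norm (xdag - xbar - A w) | w. norm w \<le> R}"

definition bias :: "('a::real_normed_vector \<Rightarrow> 'a) \<Rightarrow> 'a \<Rightarrow> 'a \<Rightarrow> real \<Rightarrow> real" where
  "bias A xdag xbar \<alpha> = \<alpha> * norm (resolvent A \<alpha> (xdag - xbar))"

end

theory Submission
  imports Defs "HOL-Real_Asymp.Real_Asymp"
begin

text \<open>
  For monotone \<open>A\<close> the operator \<open>A + \<alpha>I\<close> is coercive, so the resolvent exists and has norm at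
  most \<open>1/\<alpha>\<close>, while \<open>\<alpha>(A + \<alpha>I)\<^sup>-\<^sup>1A\<close> has norm at most \<open>2\<alpha>\<close>. Splitting
  \<open>xdag - xbar = Aw + r\<close> with \<open>\<parallel>w\<parallel> \<le> R\<close> and \<open>\<parallel>r\<parallel>\<close> close to \<open>d(R)\<close> gives
  \<open>B(\<alpha>) \<le> 2\<alpha>R + d(R)\<close>; the choice \<open>R = \<alpha>\<^sup>-\<^sup>1\<^sup>/\<^sup>2\<close> yields
  \<open>B(\<alpha>) \<le> 2\<surd>\<alpha> + 2\<^sup>qK (log 1/\<alpha>)\<^sup>-\<^sup>q\<close>. The data error contributes at most \<open>\<delta>/\<alpha>\<close>, which for
  \<open>\<alpha> = c\<delta>\<^sup>\<zeta>\<close> with \<open>\<zeta> < 1\<close> decays polynomially and is dominated by the logarithmic rate.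
\<close>

lemma norm_ge_of_inner_ge:
  fixes x y :: "'a::real_inner"
  assumes "\<alpha> * (norm x)\<^sup>2 \<le> inner y x"
  shows "\<alpha> * norm x \<le> norm y"
proof (cases "x = 0")
  case False
  have "(\<alpha> * norm x) * norm x \<le> norm y * norm x"
    using assms norm_cauchy_schwarz[of y x] by (simp add: power2_eq_square mult.assoc)
  then show ?thesis
    using False by simp
qed simp

text \<open>Lax--Milgram: for \<open>t = \<alpha>/M\<^sup>2\<close> the map \<open>x \<mapsto> x - t(g x - y)\<close> is a contraction.\<close>

lemma coercive_bounded_linear_surj:
  fixes g :: "'a::{real_inner, complete_space} \<Rightarrow> 'a"
  assumes lin: "bounded_linear g" and \<alpha>: "\<alpha> > 0"
    and coercive: "\<And>x. \<alpha> * (norm x)\<^sup>2 \<le> inner (g x) x"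
  shows "surj g"
proof -
  obtain K where K: "K > 0" "\<And>x. norm (g x) \<le> norm x * K"
    using bounded_linear.pos_bounded[OF lin] by blast
  define M where "M = K + \<alpha>"
  have M: "M > 0"
    unfolding M_def using K \<alpha> by simp
  have gM: "norm (g x) \<le> M * norm x" for x
  proof -
    have "norm (g x) \<le> K * norm x"
      using K(2)[of x] by (simp add: mult.commute)
    also have "\<dots> \<le> M * norm x"
      unfolding M_def using K \<alpha> by (simp add: mult_right_mono)
    finally show ?thesis .
  qed
  define t where "t = \<alpha> / M\<^sup>2"
  define c where "c = sqrt (1 - \<alpha>\<^sup>2 / M\<^sup>2)"
  have ratio: "0 < \<alpha>\<^sup>2 / M\<^sup>2" "\<alpha>\<^sup>2 / M\<^sup>2 \<le> 1"
    using K \<alpha> M unfolding M_def by (auto simp: power_mono)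
  have c: "0 \<le> c" "c < 1"
    unfolding c_def using ratio by auto
  have contraction: "norm (v - t *\<^sub>R g v) \<le> c * norm v" for v
  proof -
    have gv: "(norm (g v))\<^sup>2 \<le> M\<^sup>2 * (norm v)\<^sup>2"
      using gM[of v] by (metis norm_ge_zero power_mono power_mult_distrib)
    have "(norm (v - t *\<^sub>R g v))\<^sup>2 = (norm v)\<^sup>2 - 2 * t * inner (g v) v + t\<^sup>2 * (norm (g v))\<^sup>2"
      unfolding power2_norm_eq_inner
      by (simp add: inner_diff_left inner_diff_right inner_commute algebra_simps power2_eq_square)
    also have "\<dots> \<le> (norm v)\<^sup>2 - 2 * t * (\<alpha> * (norm v)\<^sup>2) + t\<^sup>2 * (M\<^sup>2 * (norm v)\<^sup>2)"
      using coercive[of v] gv \<alpha> M unfolding t_def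
      by (smt (verit) mult_left_mono zero_le_power2 divide_nonneg_nonneg)
    also have "\<dots> = (c * norm v)\<^sup>2"
      unfolding t_def c_def using M ratio by (simp add: field_simps power2_eq_square)
    finally show ?thesis
      using c by (meson mult_nonneg_nonneg norm_ge_zero power2_le_imp_le)
  qed
  have "\<exists>x. g x = y" for y
  proof -
    define T where "T x = x - t *\<^sub>R (g x - y)" for x
    have "dist (T x) (T z) \<le> c * dist x z" for x z
    proof -
      have "T x - T z = (x - z) - t *\<^sub>R g (x - z)"
        unfolding T_def linear_diff[OF bounded_linear.linear[OF lin]] by (simp add: algebra_simps)
      then show ?thesis
        using contraction[of "x - z"] by (simp add: dist_norm)
    qed
    then obtain x where "T x = x"
      using banach_fix_type[OF c] by blast
    moreover have "t \<noteq> 0"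
      unfolding t_def using \<alpha> M by simp
    ultimately show ?thesis
      unfolding T_def by auto
  qed
  then show ?thesis
    by (metis surjI)
qed

lemma monotone_op_shift_coercive:
  assumes "monotone_op A"
  shows "\<alpha> * (norm x)\<^sup>2 \<le> inner (A x + \<alpha> *\<^sub>R x) x"
proof -
  have "inner (A x + \<alpha> *\<^sub>R x) x = inner (A x) x + \<alpha> * (norm x)\<^sup>2"
    by (simp add: inner_add_left power2_norm_eq_inner)
  then show ?thesis
    using assms unfolding monotone_op_def by (metis le_add_same_cancel2)
qed

context
  fixes A :: "'a::{real_inner, complete_space} \<Rightarrow> 'a" and \<alpha> :: real
  assumes lin: "bounded_linear A" and mon: "monotone_op A" and \<alpha>: "\<alpha> > 0"
begin

lemma bij_shift_monotone_op: "bij (\<lambda>x. A x + \<alpha> *\<^sub>R x)"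
proof (rule bijI)
  have shift_lin: "bounded_linear (\<lambda>x. A x + \<alpha> *\<^sub>R x)"
    using lin by (intro bounded_linear_add bounded_linear_scaleR_right bounded_linear_ident)
  show "surj (\<lambda>x. A x + \<alpha> *\<^sub>R x)"
    using coercive_bounded_linear_surj[OF shift_lin \<alpha> monotone_op_shift_coercive[OF mon]] .
  show "inj (\<lambda>x. A x + \<alpha> *\<^sub>R x)"
  proof (rule linear_injective_0[OF bounded_linear.linear[OF shift_lin], THEN iffD2], intro allI impI)
    fix x assume "A x + \<alpha> *\<^sub>R x = 0"
    then have "\<alpha> * norm x \<le> 0"
      using norm_ge_of_inner_ge[OF monotone_op_shift_coercive[OF mon, of \<alpha> x]] by simp
    then show "x = 0"
      using \<alpha> by (simp add: mult_le_0_iff)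
  qed
qed

lemma resolvent_right_inverse: "A (resolvent A \<alpha> y) + \<alpha> *\<^sub>R resolvent A \<alpha> y = y"
  using surj_f_inv_f[OF bij_is_surj[OF bij_shift_monotone_op], of y]
  unfolding resolvent_def by simp

lemma resolvent_left_inverse: "resolvent A \<alpha> (A x + \<alpha> *\<^sub>R x) = x"
  using inv_f_f[OF bij_is_inj[OF bij_shift_monotone_op], of x]
  unfolding resolvent_def by simp

lemma linear_resolvent: "linear (resolvent A \<alpha>)"
proof (rule linearI)
  let ?r = "resolvent A \<alpha>"
  have A_add: "A (u + v) = A u + A v" and A_scale: "A (s *\<^sub>R u) = s *\<^sub>R A u" for u v s
    using lin by (simp_all add: linear_simps)
  show "?r (u + v) = ?r u + ?r v" for u v
    using resolvent_left_inverse[of "?r u + ?r v"]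
    by (simp add: A_add algebra_simps resolvent_right_inverse)
  show "?r (s *\<^sub>R u) = s *\<^sub>R ?r u" for s u
  proof -
    have "A (s *\<^sub>R ?r u) + \<alpha> *\<^sub>R (s *\<^sub>R ?r u) = s *\<^sub>R (A (?r u) + \<alpha> *\<^sub>R ?r u)"
      by (simp add: A_scale algebra_simps)
    then show ?thesis
      using resolvent_left_inverse[of "s *\<^sub>R ?r u"] by (simp add: resolvent_right_inverse)
  qed
qed

lemma resolvent_norm_le: "\<alpha> * norm (resolvent A \<alpha> y) \<le> norm y"
  using norm_ge_of_inner_ge[OF monotone_op_shift_coercive[OF mon, of \<alpha> "resolvent A \<alpha> y"]]
  by (simp add: resolvent_right_inverse)

lemma norm_scaled_resolvent_apply_le: "norm (\<alpha> *\<^sub>R resolvent A \<alpha> (A w)) \<le> 2 * \<alpha> * norm w"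
proof -
  have "resolvent A \<alpha> (A w) = resolvent A \<alpha> (A w + \<alpha> *\<^sub>R w - \<alpha> *\<^sub>R w)"
    by simp
  also have "\<dots> = w - \<alpha> *\<^sub>R resolvent A \<alpha> w"
    by (simp only: linear_diff[OF linear_resolvent] linear_scale[OF linear_resolvent]
        resolvent_left_inverse)
  finally have "norm (\<alpha> *\<^sub>R resolvent A \<alpha> (A w)) = norm (\<alpha> *\<^sub>R w - \<alpha> *\<^sub>R (\<alpha> *\<^sub>R resolvent A \<alpha> w))"
    by (simp add: scaleR_diff_right)
  also have "\<dots> \<le> norm (\<alpha> *\<^sub>R w) + norm (\<alpha> *\<^sub>R (\<alpha> *\<^sub>R resolvent A \<alpha> w))"
    by (rule norm_triangle_ineq4)
  also have "\<dots> = \<alpha> * norm w + \<alpha> * (\<alpha> * norm (resolvent A \<alpha> w))"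
    using \<alpha> by simp
  also have "\<dots> \<le> 2 * \<alpha> * norm w"
    using resolvent_norm_le[of w] \<alpha> by (simp add: mult_left_mono)
  finally show ?thesis .
qed

lemma bias_le_source_decomposition:
  assumes "xdag - xbar = A w + r"
  shows "bias A xdag xbar \<alpha> \<le> 2 * \<alpha> * norm w + norm r"
proof -
  have "bias A xdag xbar \<alpha> = norm (\<alpha> *\<^sub>R resolvent A \<alpha> (A w) + \<alpha> *\<^sub>R resolvent A \<alpha> r)"
    unfolding bias_def assms linear_add[OF linear_resolvent] scaleR_add_right[symmetric]
    using \<alpha> by simp
  also have "\<dots> \<le> norm (\<alpha> *\<^sub>R resolvent A \<alpha> (A w)) + norm (\<alpha> *\<^sub>R resolvent A \<alpha> r)"
    by (rule norm_triangle_ineq)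
  also have "\<dots> \<le> 2 * \<alpha> * norm w + \<alpha> * norm (resolvent A \<alpha> r)"
    using norm_scaled_resolvent_apply_le[of w] \<alpha> by simp
  also have "\<dots> \<le> 2 * \<alpha> * norm w + norm r"
    using resolvent_norm_le by simp
  finally show ?thesis .
qed

lemma bias_le_dist_fun:
  assumes "R \<ge> 0"
  shows "bias A xdag xbar \<alpha> \<le> 2 * \<alpha> * R + dist_fun A xdag xbar R"
proof (rule field_le_epsilon)
  fix \<epsilon> :: real assume "\<epsilon> > 0"
  define S where "S = {norm (xdag - xbar - A w) | w. norm w \<le> R}"
  have "norm (xdag - xbar - A 0) \<in> S"
    unfolding S_def using assms by (intro CollectI exI[of _ 0]) simp
  then obtain s where "s \<in> S" "s < Inf S + \<epsilon>"
    using cInf_lessD[of S "Inf S + \<epsilon>"] \<open>\<epsilon> > 0\<close> by force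
  then obtain w where w: "norm w \<le> R" "norm (xdag - xbar - A w) < dist_fun A xdag xbar R + \<epsilon>"
    unfolding S_def dist_fun_def by blast
  have "bias A xdag xbar \<alpha> \<le> 2 * \<alpha> * norm w + norm (xdag - xbar - A w)"
    by (rule bias_le_source_decomposition) simp
  also have "\<dots> \<le> 2 * \<alpha> * R + (dist_fun A xdag xbar R + \<epsilon>)"
    using w \<alpha> by (intro add_mono mult_left_mono) auto
  finally show "bias A xdag xbar \<alpha> \<le> 2 * \<alpha> * R + dist_fun A xdag xbar R + \<epsilon>"
    by simp
qed

lemma lavrentiev_error_le:
  assumes "norm (A xdag - yd) \<le> \<delta>"
  shows "norm (lavrentiev A \<alpha> yd xbar - xdag) \<le> \<delta> / \<alpha> + bias A xdag xbar \<alpha>"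
proof -
  let ?r = "resolvent A \<alpha>"
  have r_split: "?r (u + (v - \<alpha> *\<^sub>R w)) = ?r u + (?r v - \<alpha> *\<^sub>R ?r w)" for u v w
    by (simp add: linear_add[OF linear_resolvent] linear_diff[OF linear_resolvent]
        linear_scale[OF linear_resolvent])
  have "lavrentiev A \<alpha> yd xbar = ?r ((yd - A xdag) + ((A xdag + \<alpha> *\<^sub>R xdag) - \<alpha> *\<^sub>R (xdag - xbar)))"
    unfolding lavrentiev_def by (simp add: algebra_simps)
  also have "\<dots> = ?r (yd - A xdag) + (xdag - \<alpha> *\<^sub>R ?r (xdag - xbar))"
    unfolding r_split resolvent_left_inverse ..
  finally have error_eq: "lavrentiev A \<alpha> yd xbar - xdag = ?r (yd - A xdag) - \<alpha> *\<^sub>R ?r (xdag - xbar)"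
    by simp
  have "norm (lavrentiev A \<alpha> yd xbar - xdag) \<le> norm (?r (yd - A xdag)) + norm (\<alpha> *\<^sub>R ?r (xdag - xbar))"
    unfolding error_eq by (rule norm_triangle_ineq4)
  also have "norm (?r (yd - A xdag)) \<le> \<delta> / \<alpha>"
    using resolvent_norm_le[of "yd - A xdag"] assms \<alpha>
    by (simp add: norm_minus_commute field_simps)
  also have "norm (\<alpha> *\<^sub>R ?r (xdag - xbar)) = bias A xdag xbar \<alpha>"
    unfolding bias_def using \<alpha> by simp
  finally show ?thesis by simp
qed

end

lemma bias_le_log_rate:
  fixes A :: "'a::{real_inner, complete_space} \<Rightarrow> 'a"
  assumes lin: "bounded_linear A" and mon: "monotone_op A" and Rlow: "Rlow > 0"
    and dR: "\<And>R. R \<ge> Rlow \<Longrightarrow> dist_fun A xdag xbar R \<le> K / (ln R) powr q"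
    and \<alpha>: "0 < \<alpha>" "\<alpha> < 1" "\<alpha> \<le> 1 / Rlow\<^sup>2"
  shows "bias A xdag xbar \<alpha> \<le> 2 * sqrt \<alpha> + K * 2 powr q * ln (1 / \<alpha>) powr (- q)"
proof -
  define R where "R = 1 / sqrt \<alpha>"
  have "sqrt \<alpha> \<le> 1 / Rlow"
    using real_sqrt_le_mono[OF \<alpha>(3)] Rlow by (simp add: real_sqrt_divide)
  then have R: "R \<ge> Rlow"
    unfolding R_def using \<alpha> Rlow by (simp add: field_simps)
  have ln_R: "ln R = ln (1 / \<alpha>) / 2"
    unfolding R_def using \<alpha> by (simp add: ln_div ln_sqrt)
  have ln_pos: "ln (1 / \<alpha>) > 0"
    using \<alpha> by simp
  have "K / (ln R) powr q = K / (ln (1 / \<alpha>) powr q / 2 powr q)"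
    unfolding ln_R using ln_pos by (simp add: powr_divide)
  also have "\<dots> = K * 2 powr q * ln (1 / \<alpha>) powr (- q)"
    using ln_pos by (simp add: powr_minus field_simps)
  finally have rate: "K / (ln R) powr q = K * 2 powr q * ln (1 / \<alpha>) powr (- q)" .
  have "2 * \<alpha> * R = 2 * (\<alpha> / sqrt \<alpha>)"
    unfolding R_def by simp
  also have "\<dots> = 2 * sqrt \<alpha>"
    using \<alpha> by (simp add: real_div_sqrt)
  finally have radius: "2 * \<alpha> * R = 2 * sqrt \<alpha>" .
  show ?thesis
    using bias_le_dist_fun[OF lin mon \<alpha>(1), of R xdag xbar] dR[OF R] R Rlow rate radius by simp
qed

lemma bias_bigo_log_rate:
  fixes A :: "'a::{real_inner, complete_space} \<Rightarrow> 'a"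
  assumes lin: "bounded_linear A" and mon: "monotone_op A" and Rlow: "Rlow > 0"
    and dR: "\<And>R. R \<ge> Rlow \<Longrightarrow> dist_fun A xdag xbar R \<le> K / (ln R) powr q"
  shows "bias A xdag xbar \<in> O[at_right 0](\<lambda>\<alpha>. ln (1 / \<alpha>) powr (- q))"
proof -
  have "\<forall>\<^sub>F \<alpha> in at_right 0. 0 < \<alpha> \<and> \<alpha> < 1 \<and> \<alpha> \<le> 1 / Rlow\<^sup>2"
    unfolding eventually_at_right_field using Rlow
    by (intro exI[of _ "min 1 (1 / Rlow\<^sup>2)"]) auto
  then have "\<forall>\<^sub>F \<alpha> in at_right 0.
      norm (bias A xdag xbar \<alpha>) \<le> norm (2 * sqrt \<alpha> + K * 2 powr q * ln (1 / \<alpha>) powr (- q))"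
    by eventually_elim
      (use bias_le_log_rate[OF lin mon Rlow dR] in \<open>auto simp: bias_def intro: order_trans[OF _ abs_ge_self]\<close>)
  then have "bias A xdag xbar \<in> O[at_right 0](\<lambda>\<alpha>. 2 * sqrt \<alpha> + K * 2 powr q * ln (1 / \<alpha>) powr (- q))"
    by (rule landau_o.big_mono)
  also have "(\<lambda>\<alpha>::real. 2 * sqrt \<alpha> + K * 2 powr q * ln (1 / \<alpha>) powr (- q)) \<in> O[at_right 0](\<lambda>\<alpha>. ln (1 / \<alpha>) powr (- q))"
    by real_asymp
  finally show ?thesis .
qed

lemma apriori_bound_bigo_log_rate:
  fixes f :: "real \<Rightarrow> real"
  assumes f_rate: "f \<in> O[at_right 0](\<lambda>\<alpha>. ln (1 / \<alpha>) powr (- q))"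
    and c: "c > 0" and \<zeta>: "0 < \<zeta>" "\<zeta> < 1"
  shows "(\<lambda>\<delta>. \<delta> / (c * \<delta> powr \<zeta>) + f (c * \<delta> powr \<zeta>)) \<in> O[at_right 0](\<lambda>\<delta>. ln (1 / \<delta>) powr (- q))"
proof (rule sum_in_bigo(1))
  show "(\<lambda>\<delta>::real. \<delta> / (c * \<delta> powr \<zeta>)) \<in> O[at_right 0](\<lambda>\<delta>. ln (1 / \<delta>) powr (- q))"
    using c \<zeta> by real_asymp
  have "filterlim (\<lambda>\<delta>::real. c * \<delta> powr \<zeta>) (at_right 0) (at_right 0)"
    using c \<zeta> by real_asymp
  then have "(\<lambda>\<delta>. f (c * \<delta> powr \<zeta>)) \<in> O[at_right 0](\<lambda>\<delta>. ln (1 / (c * \<delta> powr \<zeta>)) powr (- q))"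
    by (rule landau_o.big.compose[OF f_rate])
  also have "(\<lambda>\<delta>::real. ln (1 / (c * \<delta> powr \<zeta>)) powr (- q)) \<in> O[at_right 0](\<lambda>\<delta>. ln (1 / \<delta>) powr (- q))"
    using c \<zeta> by real_asymp
  finally show "(\<lambda>\<delta>. f (c * \<delta> powr \<zeta>)) \<in> O[at_right 0](\<lambda>\<delta>. ln (1 / \<delta>) powr (- q))" .
qed

lemma lavrentiev_apriori_error_bigo:
  fixes A :: "'a::{real_inner, complete_space} \<Rightarrow> 'a"
  assumes lin: "bounded_linear A" and mon: "monotone_op A"
    and bias_rate: "bias A xdag xbar \<in> O[at_right 0](\<lambda>\<alpha>. ln (1 / \<alpha>) powr (- q))"
    and c: "c > 0" and \<zeta>: "0 < \<zeta>" "\<zeta> < 1"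
  shows "\<exists>C. \<forall>\<^sub>F \<delta> in at_right 0. \<forall>yd. norm (A xdag - yd) \<le> \<delta> \<longrightarrow>
           norm (lavrentiev A (c * \<delta> powr \<zeta>) yd xbar - xdag) \<le> C * ln (1 / \<delta>) powr (- q)"
proof -
  obtain C where "\<forall>\<^sub>F \<delta> in at_right 0.
      norm (\<delta> / (c * \<delta> powr \<zeta>) + bias A xdag xbar (c * \<delta> powr \<zeta>)) \<le> C * norm (ln (1 / \<delta>) powr (- q))"
    using apriori_bound_bigo_log_rate[OF bias_rate c \<zeta>] by (elim landau_o.bigE)
  moreover have "\<forall>\<^sub>F \<delta> in at_right (0::real). 0 < \<delta>"
    by (simp add: eventually_at_right_less)
  ultimately have "\<forall>\<^sub>F \<delta> in at_right 0. \<forall>yd. norm (A xdag - yd) \<le> \<delta> \<longrightarrow>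
      norm (lavrentiev A (c * \<delta> powr \<zeta>) yd xbar - xdag) \<le> C * ln (1 / \<delta>) powr (- q)"
  proof eventually_elim
    case (elim \<delta>)
    show ?case
    proof (intro allI impI)
      fix yd assume "norm (A xdag - yd) \<le> \<delta>"
      then have "norm (lavrentiev A (c * \<delta> powr \<zeta>) yd xbar - xdag)
          \<le> \<delta> / (c * \<delta> powr \<zeta>) + bias A xdag xbar (c * \<delta> powr \<zeta>)"
        using lavrentiev_error_le[OF lin mon] c elim by simp
      also have "\<dots> \<le> C * ln (1 / \<delta>) powr (- q)"
        using elim by simp
      finally show "norm (lavrentiev A (c * \<delta> powr \<zeta>) yd xbar - xdag) \<le> C * ln (1 / \<delta>) powr (- q)" .
    qed
  qed
  then show ?thesis
    by blast
qed

theorem mainTheorem13: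
  fixes A :: "'a::{real_inner, complete_space} \<Rightarrow> 'a"
    and xdag xbar y :: 'a
    and K q Rlow c \<zeta> :: real
  assumes sep: "separable_space (euclidean :: 'a topology)"
    and lin: "bounded_linear A"
    and mon: "monotone_op A"
    and y_def: "y = A xdag"
    and K: "K > 0" and q: "q > 0" and Rlow: "Rlow > 1"
    and dR: "\<And>R. R \<ge> Rlow \<Longrightarrow> dist_fun A xdag xbar R \<le> K / (ln R) powr q"
  shows "bias A xdag xbar \<in> O[at_right 0](\<lambda>\<alpha>. (ln (1 / \<alpha>)) powr (- q)) \<and>
         (c > 0 \<longrightarrow> 0 < \<zeta> \<longrightarrow> \<zeta> < 1 \<longrightarrow>
         (\<exists>C. \<forall>\<^sub>F \<delta> in at_right 0. \<forall>yd. norm (y - yd) \<le> \<delta> \<longrightarrow>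
              norm (lavrentiev A (c * \<delta> powr \<zeta>) yd xbar - xdag)
                \<le> C * (ln (1 / \<delta>)) powr (- q)))"
proof (intro conjI impI)
  show bias_rate: "bias A xdag xbar \<in> O[at_right 0](\<lambda>\<alpha>. ln (1 / \<alpha>) powr (- q))"
    using bias_bigo_log_rate[where Rlow = Rlow, OF lin mon _ dR] Rlow by simp
  assume "c > 0" "0 < \<zeta>" "\<zeta> < 1"
  from lavrentiev_apriori_error_bigo[OF lin mon bias_rate this]
  show "\<exists>C. \<forall>\<^sub>F \<delta> in at_right 0. \<forall>yd. norm (y - yd) \<le> \<delta> \<longrightarrow>
      norm (lavrentiev A (c * \<delta> powr \<zeta>) yd xbar - xdag) \<le> C * ln (1 / \<delta>) powr (- q)"
    unfolding y_def .
qed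

end
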